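(* Let $R$, $R'$ be Hecke symmetries with the same parameter $q$ on finite dimensional spaces $V$, $V'$. For every $n\ge0$ there is an isomorphism $A_n(R',R)\cong\operatorname{Hom}_{\mathcal H_n}(V^{\otimes n},V'^{\otimes n})^*$, where $V^{\otimes n}$ and $V'^{\otimes n}$ are $\mathcal H_n(q)$-modules via $R$ and $R'$.
   Context: A Hecke symmetry with parameter $0\neq q\in\Bbbk$ on $V$ is a linear operator $R$ on $V\otimes V$ with $(R+\mathrm{id})(R-q\,\mathrm{id})=0$ and the braid relation $(R\otimes\mathrm{id})(\mathrm{id}\otimes R)(R\otimes\mathrm{id})=(\mathrm{id}\otimes R)(R\otimes\mathrm{id})(\mathrm{id}\otimes R)$; the Hecke algebra $\mathcal H_n(q)$ acts on $V^{\otimes n}$ with $T_i$ acting as $\mathrm{id}^{\otimes(i-1)}\otimes R\otimes\mathrm{id}^{\otimes(n-i-1)}$. With $R'^*$ the adjoint of $R'$ on $(V'^* )^{\otimes2}\cong(V'^{\otimes2})^*$, $\mathcal R$ is the operator on $(V'^*\otimes V)^{\otimes2}$ corresponding to $(R'^* )^{-1}\otimes R$ under $(V'^*\otimes V)^{\otimes2}\cong(V'^* )^{\otimes2}\otimes V^{\otimes2}$, and $A(R',R)$ is the quotient of $\mathbb T(V'^*\otimes V)$ by the ideal generated by $\operatorname{Im}(\mathcal R-\mathrm{id})$, with $A_n(R',R)$ its degree $n$ component. *)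

theory Defs
  imports Main
begin

text \<open>A finite dimensional space V of dimension d has basis
  indexed by the set {..<d}. Tensors of degree n over an alphabet X (basis index set)
  are functions on words (lists) of length n over X, vanishing off such words.
  Linear operators on the n-th tensor power are matrices indexed by pairs of words:
  entry M u w is the coefficient of e_u in M(e_w).\<close>

definition words :: "'x set \<Rightarrow> nat \<Rightarrow> 'x list set" where
  "words X n = {w. length w = n \<and> set w \<subseteq> X}"

definition tens :: "'x set \<Rightarrow> nat \<Rightarrow> ('x list \<Rightarrow> 'k::field) set" where
  "tens X n = {x. \<forall>w. w \<notin> words X n \<longrightarrow> x w = 0}"

definition idmat :: "'x list \<Rightarrow> 'x list \<Rightarrow> 'k::field" where
  "idmat u w = (if u = w then 1 else 0)"

definition mmul :: "'x set \<Rightarrow> nat \<Rightarrow> ('x list \<Rightarrow> 'x list \<Rightarrow> 'k::field)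
    \<Rightarrow> ('x list \<Rightarrow> 'x list \<Rightarrow> 'k) \<Rightarrow> ('x list \<Rightarrow> 'x list \<Rightarrow> 'k)" where
  "mmul X n A B = (\<lambda>u w. \<Sum>v\<in>words X n. A u v * B v w)"

definition meq :: "'x set \<Rightarrow> nat \<Rightarrow> ('x list \<Rightarrow> 'x list \<Rightarrow> 'k::field)
    \<Rightarrow> ('x list \<Rightarrow> 'x list \<Rightarrow> 'k) \<Rightarrow> bool" where
  "meq X n A B = (\<forall>u\<in>words X n. \<forall>w\<in>words X n. A u w = B u w)"

definition mapply :: "'x set \<Rightarrow> nat \<Rightarrow> ('x list \<Rightarrow> 'x list \<Rightarrow> 'k::field)
    \<Rightarrow> ('x list \<Rightarrow> 'k) \<Rightarrow> ('x list \<Rightarrow> 'k)" where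
  "mapply X n A x = (\<lambda>u. if u \<in> words X n then (\<Sum>w\<in>words X n. A u w * x w) else 0)"

definition minv :: "'x set \<Rightarrow> nat \<Rightarrow> ('x list \<Rightarrow> 'x list \<Rightarrow> 'k::field)
    \<Rightarrow> ('x list \<Rightarrow> 'x list \<Rightarrow> 'k)" where
  "minv X n M = (SOME S. meq X n (mmul X n S M) idmat \<and> meq X n (mmul X n M S) idmat)"

text \<open>id^{i} \<otimes> M \<otimes> id^{n-i-2} for an operator M on the second tensor power
  (0-based position i; so lift X n R (i-1) is the action of T_i).\<close>
definition lift :: "'x set \<Rightarrow> nat \<Rightarrow> ('x list \<Rightarrow> 'x list \<Rightarrow> 'k::field) \<Rightarrow> nat
    \<Rightarrow> ('x list \<Rightarrow> 'x list \<Rightarrow> 'k)" where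
  "lift X n M i = (\<lambda>u w. if take i u = take i w \<and> drop (i+2) u = drop (i+2) w
       then M (take 2 (drop i u)) (take 2 (drop i w)) else 0)"

definition hecke_symmetry :: "nat \<Rightarrow> 'k::field \<Rightarrow> (nat list \<Rightarrow> nat list \<Rightarrow> 'k) \<Rightarrow> bool" where
  "hecke_symmetry d q R \<longleftrightarrow>
     meq {..<d} 2 (mmul {..<d} 2 (\<lambda>u w. R u w + idmat u w) (\<lambda>u w. R u w - q * idmat u w))
        (\<lambda>_ _. 0) \<and>
     meq {..<d} 3 (mmul {..<d} 3 (lift {..<d} 3 R 0) (mmul {..<d} 3 (lift {..<d} 3 R 1) (lift {..<d} 3 R 0)))
                  (mmul {..<d} 3 (lift {..<d} 3 R 1) (mmul {..<d} 3 (lift {..<d} 3 R 0) (lift {..<d} 3 R 1)))"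

definition tmul :: "nat \<Rightarrow> ('x list \<Rightarrow> 'k::field) \<Rightarrow> ('x list \<Rightarrow> 'k) \<Rightarrow> ('x list \<Rightarrow> 'k)" where
  "tmul m x y = (\<lambda>w. x (take m w) * y (drop m w))"

definition lspan :: "('x \<Rightarrow> 'k::field) set \<Rightarrow> ('x \<Rightarrow> 'k) set" where
  "lspan S = {z. \<exists>F c. finite F \<and> F \<subseteq> S \<and> z = (\<lambda>w. \<Sum>f\<in>F. c f * f w)}"

text \<open>Degree-n component of the two-sided ideal of the tensor algebra T(X) generated
  by a set S of degree-2 tensors.\<close>
definition ideal_deg :: "'x set \<Rightarrow> nat \<Rightarrow> ('x list \<Rightarrow> 'k::field) set \<Rightarrow> ('x list \<Rightarrow> 'k) set" where
  "ideal_deg X n S = lspan {tmul (i+2) (tmul i x s) y | i x s y.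
      i + 2 \<le> n \<and> x \<in> tens X i \<and> s \<in> S \<and> y \<in> tens X (n - 2 - i)}"

text \<open>Basis of W = V'^* \<otimes> V: pairs (a,i), a < d' (dual basis of V'), i < d (basis of V).\<close>
definition Walph :: "nat \<Rightarrow> nat \<Rightarrow> (nat \<times> nat) set" where
  "Walph d' d = {..<d'} \<times> {..<d}"

text \<open>The operator calR on W \<otimes> W corresponding to (R'^*)^{-1} \<otimes> R; the matrix of the adjoint
  in the dual basis is the transpose.\<close>
definition calR :: "nat \<Rightarrow> (nat list \<Rightarrow> nat list \<Rightarrow> 'k::field) \<Rightarrow> (nat list \<Rightarrow> nat list \<Rightarrow> 'k)
    \<Rightarrow> ((nat \<times> nat) list \<Rightarrow> (nat \<times> nat) list \<Rightarrow> 'k)" where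
  "calR d' R' R = (\<lambda>u w. minv {..<d'} 2 (\<lambda>a b. R' b a) (map fst u) (map fst w)
                          * R (map snd u) (map snd w))"

definition A_rels :: "nat \<Rightarrow> nat \<Rightarrow> (nat list \<Rightarrow> nat list \<Rightarrow> 'k::field) \<Rightarrow> (nat list \<Rightarrow> nat list \<Rightarrow> 'k)
    \<Rightarrow> ((nat \<times> nat) list \<Rightarrow> 'k) set" where
  "A_rels d' d R' R = {mapply (Walph d' d) 2 (\<lambda>u w. calR d' R' R u w - idmat u w) x | x.
       x \<in> tens (Walph d' d) 2}"

text \<open>A_n(R',R) = W^{\<otimes>n} / A_ideal, with W^{\<otimes>n} = tens (Walph d' d) n.\<close>
definition A_ideal :: "nat \<Rightarrow> nat \<Rightarrow> (nat list \<Rightarrow> nat list \<Rightarrow> 'k::field) \<Rightarrow> (nat list \<Rightarrow> nat list \<Rightarrow> 'k)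
    \<Rightarrow> nat \<Rightarrow> ((nat \<times> nat) list \<Rightarrow> 'k) set" where
  "A_ideal d' d R' R n = ideal_deg (Walph d' d) n (A_rels d' d R' R)"

text \<open>Hom_{H_n}(V^{\<otimes>n}, V'^{\<otimes>n}): linear maps (matrices, rows indexed by words over {..<d'},
  columns by words over {..<d}) commuting with the action of all generators T_1..T_{n-1}.\<close>
definition HomH :: "nat \<Rightarrow> nat \<Rightarrow> (nat list \<Rightarrow> nat list \<Rightarrow> 'k::field) \<Rightarrow> (nat list \<Rightarrow> nat list \<Rightarrow> 'k)
    \<Rightarrow> nat \<Rightarrow> (nat list \<Rightarrow> nat list \<Rightarrow> 'k) set" where
  "HomH d d' R R' n = {M.
     (\<forall>u w. u \<notin> words {..<d'} n \<or> w \<notin> words {..<d} n \<longrightarrow> M u w = 0) \<and>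
     (\<forall>i. i + 2 \<le> n \<longrightarrow>
        (\<forall>u\<in>words {..<d'} n. \<forall>w\<in>words {..<d} n.
           (\<Sum>v\<in>words {..<d} n. M u v * lift {..<d} n R i v w)
         = (\<Sum>v\<in>words {..<d'} n. lift {..<d'} n R' i u v * M v w)))}"

text \<open>f is a linear functional on the space H of matrices (i.e. f restricted to H is in H^*).\<close>
definition lin_functional :: "('a \<Rightarrow> 'b \<Rightarrow> 'k::field) set \<Rightarrow> (('a \<Rightarrow> 'b \<Rightarrow> 'k) \<Rightarrow> 'k) \<Rightarrow> bool" where
  "lin_functional H f \<longleftrightarrow> (\<forall>M\<in>H. \<forall>N\<in>H. \<forall>a b. f (\<lambda>u w. a * M u w + b * N u w) = a * f M + b * f N)"

end

theory Submission
  imports Defs "HOL-Library.Function_Algebras" "HOL.Vector_Spaces"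
begin

text \<open>Tensors in \<open>W\<^sup>\<otimes>\<^sup>n = (V'\<^sup>* \<otimes> V)\<^sup>\<otimes>\<^sup>n\<close> pair perfectly with matrices
  \<open>V\<^sup>\<otimes>\<^sup>n \<rightarrow> V'\<^sup>\<otimes>\<^sup>n\<close>, so it suffices to show that the matrices annihilated by the
  degree \<open>n\<close> part of the ideal are exactly the \<open>\<H>\<^sub>n\<close>-module maps. Pairing a generator
  \<open>y \<otimes> (\<R> - id) t \<otimes> z\<close> with a matrix \<open>M\<close> only involves the 2-by-2 slices of \<open>M\<close> at
  the positions of the relation, on which \<open>\<R> - id\<close> acts by its transpose
  \<open>N \<mapsto> R'\<^sup>-\<^sup>1 N R - N\<close>. The Hecke relation makes \<open>R'\<close> invertible, so all generators
  annihilate \<open>M\<close> iff every slice satisfies \<open>N R = R' N\<close>, i.e. iff \<open>M\<close> commutes with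
  every \<open>T\<^sub>i\<close>.\<close>

section \<open>Words and basis tensors\<close>

lemma words_length: "u \<in> words X n \<Longrightarrow> length u = n"
  by (simp add: words_def)

lemma finite_words: "finite X \<Longrightarrow> finite (words X n)"
  using finite_lists_length_eq[of X n] by (simp add: words_def conj_commute)

lemma append_in_words: "u \<in> words X m \<Longrightarrow> v \<in> words X k \<Longrightarrow> u @ v \<in> words X (m + k)"
  by (auto simp: words_def)

lemma zip_in_words: "u \<in> words A n \<Longrightarrow> w \<in> words B n \<Longrightarrow> zip u w \<in> words (A \<times> B) n"
  by (auto simp: words_def dest: set_zip_leftD set_zip_rightD)

lemma map_fst_in_words: "U \<in> words (A \<times> B) n \<Longrightarrow> map fst U \<in> words A n"
  and map_snd_in_words: "U \<in> words (A \<times> B) n \<Longrightarrow> map snd U \<in> words B n"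
  by (auto simp: words_def)

lemma append3_in_words:
  "u1 \<in> words X i \<Longrightarrow> a \<in> words X 2 \<Longrightarrow> u3 \<in> words X k \<Longrightarrow> u1 @ a @ u3 \<in> words X (i + 2 + k)"
  by (auto simp: words_def)

lemma sum_words_append:
  "(\<Sum>U\<in>words X (m + k). g U) = (\<Sum>u\<in>words X m. \<Sum>v\<in>words X k. g (u @ v))"
proof -
  have "(\<Sum>U\<in>words X (m + k). g U) = (\<Sum>(u, v)\<in>words X m \<times> words X k. g (u @ v))"
    by (rule sum.reindex_bij_witness[where i = "\<lambda>(u, v). u @ v" and j = "\<lambda>U. (take m U, drop m U)"])
      (auto simp: words_def dest: in_set_takeD in_set_dropD)
  then show ?thesis
    by (simp add: sum.cartesian_product)
qed

lemma sum_words_split3: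
  "(\<Sum>U\<in>words X (i + 2 + k). g U) = (\<Sum>u\<in>words X i. \<Sum>a\<in>words X 2. \<Sum>v\<in>words X k. g (u @ a @ v))"
  by (simp only: add.assoc sum_words_append)

lemma words_split3:
  assumes "u \<in> words X (i + 2 + k)"
  obtains u1 a u3 where "u = u1 @ a @ u3" "u1 \<in> words X i" "a \<in> words X 2" "u3 \<in> words X k"
proof
  show "u = take i u @ take 2 (drop i u) @ drop (i + 2) u"
    by (metis append_take_drop_id drop_drop add.commute)
qed (use assms in \<open>auto simp: words_def dest!: in_set_takeD in_set_dropD\<close>)

lemma ball_words_prod:
  "(\<forall>P\<in>words (A \<times> B) n. f (map fst P) (map snd P)) \<longleftrightarrow> (\<forall>a\<in>words A n. \<forall>b\<in>words B n. f a b)"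
proof safe
  fix a b assume all: "\<forall>P\<in>words (A \<times> B) n. f (map fst P) (map snd P)"
    and a: "a \<in> words A n" and b: "b \<in> words B n"
  have "f (map fst (zip a b)) (map snd (zip a b))"
    using all zip_in_words[OF a b] by blast
  then show "f a b"
    using words_length[OF a] words_length[OF b] by simp
qed (simp add: map_fst_in_words map_snd_in_words)

lemma sum_words_zip:
  "(\<Sum>U\<in>words (A \<times> B) n. g U) = (\<Sum>u\<in>words A n. \<Sum>w\<in>words B n. g (zip u w))"
proof -
  have "(\<Sum>U\<in>words (A \<times> B) n. g U) = (\<Sum>(u, w)\<in>words A n \<times> words B n. g (zip u w))"
    by (rule sum.reindex_bij_witness[where i = "\<lambda>(u, w). zip u w" and j = "\<lambda>U. (map fst U, map snd U)"])
      (auto simp: words_def zip_map_fst_snd dest: set_zip_leftD set_zip_rightD)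
  then show ?thesis
    by (simp add: sum.cartesian_product)
qed

lemma tmul_in_tens:
  assumes "x \<in> tens X m" "y \<in> tens X k"
  shows "tmul m x y \<in> tens X (m + k)"
  unfolding tens_def tmul_def
proof (intro CollectI allI impI)
  fix w assume w: "w \<notin> words X (m + k)"
  have "take m w \<notin> words X m \<or> drop m w \<notin> words X k"
    using append_in_words[of "take m w" X m "drop m w" k] w by auto
  then show "x (take m w) * y (drop m w) = 0"
    using assms by (auto simp: tens_def)
qed

lemma idmat_commute: "idmat u w = idmat w u"
  by (simp add: idmat_def)

lemma idmat_in_tens: "u \<in> words X n \<Longrightarrow> idmat u \<in> tens X n"
  by (auto simp: tens_def idmat_def)

lemma sum_idmat_left: "finite S \<Longrightarrow> u \<in> S \<Longrightarrow> (\<Sum>v\<in>S. idmat u v * f v) = (f u :: 'k::field)"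
  by (subst sum.cong[OF refl, of _ _ "\<lambda>v. if u = v then f u else 0"]) (auto simp: idmat_def)

lemma sum_idmat_right: "finite S \<Longrightarrow> u \<in> S \<Longrightarrow> (\<Sum>v\<in>S. f v * idmat v u) = (f u :: 'k::field)"
  by (subst sum.cong[OF refl, of _ _ "\<lambda>v. if v = u then f u else 0"]) (auto simp: idmat_def)

section \<open>Pairing tensors with matrices\<close>

text \<open>A word over \<open>A \<times> B\<close> is a pair of words over \<open>A\<close> and \<open>B\<close>; with \<open>A = {..<d'}\<close> and
  \<open>B = {..<d}\<close> this is the duality between \<open>W\<^sup>\<otimes>\<^sup>n\<close> and matrices \<open>V\<^sup>\<otimes>\<^sup>n \<rightarrow> V'\<^sup>\<otimes>\<^sup>n\<close>.\<close>

definition pairing :: "'a set \<Rightarrow> 'b set \<Rightarrow> nat \<Rightarrow> (('a \<times> 'b) list \<Rightarrow> 'k)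
    \<Rightarrow> ('a list \<Rightarrow> 'b list \<Rightarrow> 'k) \<Rightarrow> 'k::field" where
  "pairing A B n x M = (\<Sum>U\<in>words (A \<times> B) n. x U * M (map fst U) (map snd U))"

lemma pairing_linear_left:
  "pairing A B n (\<lambda>U. a * x U + b * y U) M = a * pairing A B n x M + b * pairing A B n y M"
  unfolding pairing_def by (simp add: sum_distrib_left sum.distrib algebra_simps)

lemma pairing_linear_right:
  "pairing A B n x (\<lambda>u w. a * M u w + b * N u w) = a * pairing A B n x M + b * pairing A B n x N"
  unfolding pairing_def by (simp add: sum_distrib_left sum.distrib algebra_simps)

lemma pairing_lin_comb:
  "finite F \<Longrightarrow> pairing A B n (\<lambda>U. \<Sum>f\<in>F. c f * f U) M = (\<Sum>f\<in>F. c f * pairing A B n f M)"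
  unfolding pairing_def by (simp add: sum_distrib_right sum_distrib_left mult.assoc sum.swap[of _ F])

lemma pairing_idmat:
  "finite A \<Longrightarrow> finite B \<Longrightarrow> P \<in> words (A \<times> B) n
   \<Longrightarrow> pairing A B n (idmat P) M = M (map fst P) (map snd P)"
  unfolding pairing_def by (simp add: finite_words sum_idmat_left)

lemma pairing_eq_0:
  assumes "\<And>U. U \<in> words (A \<times> B) n \<Longrightarrow> M (map fst U) (map snd U) = 0"
  shows "pairing A B n x M = 0"
  unfolding pairing_def using assms by simp

definition transpose_act :: "'a set \<Rightarrow> 'b set \<Rightarrow> nat \<Rightarrow> (('a \<times> 'b) list \<Rightarrow> ('a \<times> 'b) list \<Rightarrow> 'k)
    \<Rightarrow> ('a list \<Rightarrow> 'b list \<Rightarrow> 'k) \<Rightarrow> ('a list \<Rightarrow> 'b list \<Rightarrow> 'k::field)" where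
  "transpose_act A B n K N =
     (\<lambda>a' b'. \<Sum>P\<in>words (A \<times> B) n. K P (zip a' b') * N (map fst P) (map snd P))"

lemma pairing_mapply:
  assumes "finite A" "finite B"
  shows "pairing A B n (mapply (A \<times> B) n K t) N = pairing A B n t (transpose_act A B n K N)"
proof -
  have "pairing A B n (mapply (A \<times> B) n K t) N
      = (\<Sum>P\<in>words (A \<times> B) n. \<Sum>Q\<in>words (A \<times> B) n. K P Q * t Q * N (map fst P) (map snd P))"
    unfolding pairing_def mapply_def by (simp add: sum_distrib_right)
  also have "\<dots> = (\<Sum>Q\<in>words (A \<times> B) n. t Q * (\<Sum>P\<in>words (A \<times> B) n. K P Q * N (map fst P) (map snd P)))"
    by (subst sum.swap) (simp add: sum_distrib_left algebra_simps)
  also have "\<dots> = pairing A B n t (transpose_act A B n K N)"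
    unfolding pairing_def transpose_act_def by (simp add: zip_map_fst_snd)
  finally show ?thesis .
qed

section \<open>Intertwiners of the Hecke actions\<close>

lemma lift_split3:
  assumes "length u1 = i" "length w1 = i" "length a = 2" "length b = 2"
  shows "lift X n M i (u1 @ a @ u3) (w1 @ b @ w3) = (if u1 = w1 \<and> u3 = w3 then M a b else 0)"
  using assms by (simp add: lift_def)

lemma lift_transpose: "lift X n M i u w = lift X n (\<lambda>a b. M b a) i w u"
  by (auto simp: lift_def)

lemma sum_lift_right:
  assumes "finite X" "w1 \<in> words X i" "b' \<in> words X 2" "w3 \<in> words X k"
  shows "(\<Sum>v\<in>words X (i + 2 + k). G v * lift X n M i v (w1 @ b' @ w3))
       = (\<Sum>b\<in>words X 2. G (w1 @ b @ w3) * M b b')"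
proof -
  have "(\<Sum>v\<in>words X (i + 2 + k). G v * lift X n M i v (w1 @ b' @ w3))
      = (\<Sum>v1\<in>words X i. if v1 = w1 then \<Sum>b\<in>words X 2. \<Sum>v3\<in>words X k.
           if v3 = w3 then G (v1 @ b @ v3) * M b b' else 0 else 0)"
    unfolding sum_words_split3 using assms(2,3)
    by (intro sum.cong refl) (auto simp: lift_split3 words_length intro!: sum.neutral sum.cong)
  also have "\<dots> = (\<Sum>b\<in>words X 2. G (w1 @ b @ w3) * M b b')"
    using assms by (simp add: finite_words)
  finally show ?thesis .
qed

lemma sum_lift_left:
  assumes "finite X" "u1 \<in> words X i" "a \<in> words X 2" "u3 \<in> words X k"
  shows "(\<Sum>v\<in>words X (i + 2 + k). lift X n M i (u1 @ a @ u3) v * G v)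
       = (\<Sum>c\<in>words X 2. M a c * G (u1 @ c @ u3))"
  using sum_lift_right[OF assms, of G n "\<lambda>a b. M b a"]
  by (simp add: lift_transpose[of X n M] mult.commute)

definition slice :: "('a list \<Rightarrow> 'b list \<Rightarrow> 'k) \<Rightarrow> ('a \<times> 'b) list \<Rightarrow> ('a \<times> 'b) list
    \<Rightarrow> ('a list \<Rightarrow> 'b list \<Rightarrow> 'k)" where
  "slice M U1 U3 = (\<lambda>a b. M (map fst U1 @ a @ map fst U3) (map snd U1 @ b @ map snd U3))"

definition intertwines :: "'a set \<Rightarrow> 'b set \<Rightarrow> ('a list \<Rightarrow> 'a list \<Rightarrow> 'k)
    \<Rightarrow> ('b list \<Rightarrow> 'b list \<Rightarrow> 'k) \<Rightarrow> ('a list \<Rightarrow> 'b list \<Rightarrow> 'k::field) \<Rightarrow> bool" where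
  "intertwines A B R' R N \<longleftrightarrow> (\<forall>a\<in>words A 2. \<forall>b'\<in>words B 2.
     (\<Sum>b\<in>words B 2. N a b * R b b') = (\<Sum>c\<in>words A 2. R' a c * N c b'))"

lemma slice_zip:
  "length u1 = length w1 \<Longrightarrow> length u3 = length w3
   \<Longrightarrow> slice M (zip u1 w1) (zip u3 w3) = (\<lambda>a b. M (u1 @ a @ u3) (w1 @ b @ w3))"
  by (simp add: slice_def)

lemma lift_commute_iff_intertwines:
  fixes M :: "'a list \<Rightarrow> 'b list \<Rightarrow> 'k::field"
  assumes "finite A" "finite B" and n: "n = i + 2 + k"
  shows "(\<forall>u\<in>words A n. \<forall>w\<in>words B n.
            (\<Sum>v\<in>words B n. M u v * lift B n R i v w) = (\<Sum>v\<in>words A n. lift A n R' i u v * M v w))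
     \<longleftrightarrow> (\<forall>U1\<in>words (A \<times> B) i. \<forall>U3\<in>words (A \<times> B) k. intertwines A B R' R (slice M U1 U3))"
    (is "?comm \<longleftrightarrow> ?slices")
proof -
  have split: "((\<Sum>v\<in>words B n. M (u1 @ a @ u3) v * lift B n R i v (w1 @ b' @ w3))
               = (\<Sum>v\<in>words A n. lift A n R' i (u1 @ a @ u3) v * M v (w1 @ b' @ w3)))
      \<longleftrightarrow> (\<Sum>b\<in>words B 2. M (u1 @ a @ u3) (w1 @ b @ w3) * R b b')
               = (\<Sum>c\<in>words A 2. R' a c * M (u1 @ c @ u3) (w1 @ b' @ w3))"
    if "u1 \<in> words A i" "a \<in> words A 2" "u3 \<in> words A k"
      "w1 \<in> words B i" "b' \<in> words B 2" "w3 \<in> words B k" for u1 a u3 w1 b' w3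
    unfolding n using that assms(1,2) by (simp only: sum_lift_right sum_lift_left)
  show ?thesis
  proof
    assume comm: ?comm
    show ?slices
      unfolding intertwines_def slice_def
    proof (intro ballI)
      fix U1 U3 a b'
      assume U: "U1 \<in> words (A \<times> B) i" "U3 \<in> words (A \<times> B) k"
        and "a \<in> words A 2" "b' \<in> words B 2"
      note mem = map_fst_in_words[OF U(1)] \<open>a \<in> words A 2\<close> map_fst_in_words[OF U(2)]
        map_snd_in_words[OF U(1)] \<open>b' \<in> words B 2\<close> map_snd_in_words[OF U(2)]
      let ?u = "\<lambda>a. map fst U1 @ a @ map fst U3" and ?w = "\<lambda>b. map snd U1 @ b @ map snd U3"
      have "(\<Sum>v\<in>words B n. M (?u a) v * lift B n R i v (?w b'))
          = (\<Sum>v\<in>words A n. lift A n R' i (?u a) v * M v (?w b'))"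
        by (rule comm[rule_format, OF append3_in_words[OF mem(1-3), folded n]
              append3_in_words[OF mem(4-6), folded n]])
      with split[OF mem] show "(\<Sum>b\<in>words B 2. M (?u a) (?w b) * R b b')
          = (\<Sum>c\<in>words A 2. R' a c * M (?u c) (?w b'))"
        by (rule iffD1)
    qed
  next
    assume slices: ?slices
    show ?comm
    proof (intro ballI)
      fix u w assume "u \<in> words A n" "w \<in> words B n"
      then obtain u1 a u3 w1 b' w3 where u: "u = u1 @ a @ u3" and w: "w = w1 @ b' @ w3"
        and mem: "u1 \<in> words A i" "a \<in> words A 2" "u3 \<in> words A k"
          "w1 \<in> words B i" "b' \<in> words B 2" "w3 \<in> words B k"
        using n by (metis words_split3)
      have "length u1 = length w1" "length u3 = length w3"
        using mem by (simp_all add: words_length)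
      then have "slice M (zip u1 w1) (zip u3 w3) = (\<lambda>a b. M (u1 @ a @ u3) (w1 @ b @ w3))"
        by (rule slice_zip)
      moreover have "intertwines A B R' R (slice M (zip u1 w1) (zip u3 w3))"
        using slices zip_in_words[OF mem(1,4)] zip_in_words[OF mem(3,6)] by blast
      ultimately have "intertwines A B R' R (\<lambda>a b. M (u1 @ a @ u3) (w1 @ b @ w3))"
        by simp
      then show "(\<Sum>v\<in>words B n. M u v * lift B n R i v w) = (\<Sum>v\<in>words A n. lift A n R' i u v * M v w)"
        unfolding u w split[OF mem] intertwines_def using mem by blast
    qed
  qed
qed

lemma HomH_iff_slices:
  "M \<in> HomH d d' R R' n \<longleftrightarrow>
     (\<forall>u w. u \<notin> words {..<d'} n \<or> w \<notin> words {..<d} n \<longrightarrow> M u w = 0) \<and>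
     (\<forall>i k. i + 2 + k = n \<longrightarrow> (\<forall>U1\<in>words ({..<d'} \<times> {..<d}) i. \<forall>U3\<in>words ({..<d'} \<times> {..<d}) k.
        intertwines {..<d'} {..<d} R' R (slice M U1 U3)))"
proof -
  have reindex: "(\<forall>i. i + 2 \<le> n \<longrightarrow> P i) \<longleftrightarrow> (\<forall>i k. i + 2 + k = n \<longrightarrow> Q i k)"
    if "\<And>i k. i + 2 + k = n \<Longrightarrow> P i \<longleftrightarrow> Q i k" for P Q
    using that by (metis le_add1 le_add_diff_inverse)
  show ?thesis
    unfolding HomH_def mem_Collect_eq
    by (intro conj_cong refl reindex) (rule lift_commute_iff_intertwines, simp_all)
qed

section \<open>Hecke symmetries\<close>

lemma hecke_square:
  assumes "hecke_symmetry d q R" "w \<in> words {..<d} 2" "u \<in> words {..<d} 2"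
  shows "(\<Sum>v\<in>words {..<d} 2. R w v * R v u) = (q - 1) * R w u + q * idmat w u"
proof -
  let ?W = "words {..<d} 2"
  have "0 = (\<Sum>v\<in>?W. (R w v + idmat w v) * (R v u - q * idmat v u))"
    using assms unfolding hecke_symmetry_def meq_def mmul_def by simp
  also have "\<dots> = (\<Sum>v\<in>?W. R w v * R v u) - q * (\<Sum>v\<in>?W. R w v * idmat v u)
      + (\<Sum>v\<in>?W. idmat w v * R v u) - q * (\<Sum>v\<in>?W. idmat w v * idmat v u)"
    by (simp add: algebra_simps sum.distrib sum_subtractf sum_distrib_left)
  also have "\<dots> = (\<Sum>v\<in>?W. R w v * R v u) - q * R w u + R w u - q * idmat w u"
    using assms(2,3) by (simp add: finite_words sum_idmat_right sum_idmat_left)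
  finally show ?thesis
    by (simp add: algebra_simps)
qed

text \<open>The quadratic relation gives \<open>R\<^sup>-\<^sup>1 = (R - (q - 1)) / q\<close>; \<open>calR\<close> needs the
  inverse of the transpose.\<close>

lemma minv_transpose_hecke:
  fixes R :: "nat list \<Rightarrow> nat list \<Rightarrow> 'k::field"
  assumes "q \<noteq> 0" "hecke_symmetry d q R"
  defines "S \<equiv> minv {..<d} 2 (\<lambda>a b. R b a)"
  shows "\<And>c a'. c \<in> words {..<d} 2 \<Longrightarrow> a' \<in> words {..<d} 2
           \<Longrightarrow> (\<Sum>a\<in>words {..<d} 2. R a c * S a a') = idmat c a'"
    and "\<And>a'' a. a'' \<in> words {..<d} 2 \<Longrightarrow> a \<in> words {..<d} 2
           \<Longrightarrow> (\<Sum>c\<in>words {..<d} 2. S a'' c * R a c) = idmat a'' a"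
proof -
  let ?W = "words {..<d} 2"
  define T where "T = (\<lambda>u w. inverse q * (R w u - (q - 1) * idmat u w))"
  have "meq {..<d} 2 (mmul {..<d} 2 T (\<lambda>a b. R b a)) idmat
      \<and> meq {..<d} 2 (mmul {..<d} 2 (\<lambda>a b. R b a) T) idmat"
  proof (unfold meq_def mmul_def, intro conjI ballI)
    fix u w assume u: "u \<in> ?W" and w: "w \<in> ?W"
    have "(\<Sum>v\<in>?W. T u v * R w v)
        = inverse q * (\<Sum>v\<in>?W. R w v * R v u) - inverse q * (q - 1) * (\<Sum>v\<in>?W. idmat u v * R w v)"
      by (simp add: T_def sum_distrib_left sum_subtractf algebra_simps sum.distrib)
    also have "\<dots> = inverse q * ((q - 1) * R w u + q * idmat w u) - inverse q * (q - 1) * R w u"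
      using hecke_square[OF assms(2) w u] u by (simp add: finite_words sum_idmat_left)
    also have "\<dots> = idmat u w"
      using assms(1) by (simp add: algebra_simps idmat_commute[of w u] mult.assoc[symmetric])
    finally show "(\<Sum>v\<in>?W. T u v * R w v) = idmat u w" .
    have "(\<Sum>v\<in>?W. R v u * T v w)
        = inverse q * (\<Sum>v\<in>?W. R w v * R v u) - inverse q * (q - 1) * (\<Sum>v\<in>?W. R v u * idmat v w)"
      by (simp add: T_def sum_distrib_left sum_subtractf algebra_simps sum.distrib)
    also have "\<dots> = inverse q * ((q - 1) * R w u + q * idmat w u) - inverse q * (q - 1) * R w u"
      using hecke_square[OF assms(2) w u] w by (simp add: finite_words sum_idmat_right)
    also have "\<dots> = idmat u w"
      using assms(1) by (simp add: algebra_simps idmat_commute[of w u] mult.assoc[symmetric])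
    finally show "(\<Sum>v\<in>?W. R v u * T v w) = idmat u w" .
  qed
  then have "meq {..<d} 2 (mmul {..<d} 2 S (\<lambda>a b. R b a)) idmat
      \<and> meq {..<d} 2 (mmul {..<d} 2 (\<lambda>a b. R b a) S) idmat"
    unfolding S_def minv_def
    by (rule someI[where P = "\<lambda>S. meq {..<d} 2 (mmul {..<d} 2 S (\<lambda>a b. R b a)) idmat
                               \<and> meq {..<d} 2 (mmul {..<d} 2 (\<lambda>a b. R b a) S) idmat"])
  then show "\<And>c a'. c \<in> ?W \<Longrightarrow> a' \<in> ?W \<Longrightarrow> (\<Sum>a\<in>?W. R a c * S a a') = idmat c a'"
    and "\<And>a'' a. a'' \<in> ?W \<Longrightarrow> a \<in> ?W \<Longrightarrow> (\<Sum>c\<in>?W. S a'' c * R a c) = idmat a'' a"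
    unfolding meq_def mmul_def by auto
qed

text \<open>With \<open>S\<close> the inverse of the transpose of \<open>R'\<close>, the right hand side says
  \<open>R'\<^sup>-\<^sup>1 N R = N\<close>, which is \<open>N R = R' N\<close>.\<close>

lemma commute_iff_conjugation_fixed:
  fixes S R' :: "'a list \<Rightarrow> 'a list \<Rightarrow> 'k::field" and R :: "'b \<Rightarrow> 'b \<Rightarrow> 'k"
    and N :: "'a list \<Rightarrow> 'b \<Rightarrow> 'k"
  assumes "finite I"
    and left_inv: "\<And>c a'. c \<in> I \<Longrightarrow> a' \<in> I \<Longrightarrow> (\<Sum>a\<in>I. R' a c * S a a') = idmat c a'"
    and right_inv: "\<And>a'' a. a'' \<in> I \<Longrightarrow> a \<in> I \<Longrightarrow> (\<Sum>c\<in>I. S a'' c * R' a c) = idmat a'' a"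
  shows "(\<forall>a\<in>I. \<forall>b'\<in>J. (\<Sum>b\<in>J. N a b * R b b') = (\<Sum>c\<in>I. R' a c * N c b'))
     \<longleftrightarrow> (\<forall>a'\<in>I. \<forall>b'\<in>J. (\<Sum>a\<in>I. \<Sum>b\<in>J. S a a' * R b b' * N a b) = N a' b')"
proof safe
  fix a' b' assume comm: "\<forall>a\<in>I. \<forall>b'\<in>J. (\<Sum>b\<in>J. N a b * R b b') = (\<Sum>c\<in>I. R' a c * N c b')"
    and a': "a' \<in> I" and b': "b' \<in> J"
  have "(\<Sum>a\<in>I. \<Sum>b\<in>J. S a a' * R b b' * N a b) = (\<Sum>a\<in>I. S a a' * (\<Sum>b\<in>J. N a b * R b b'))"
    by (simp add: sum_distrib_left mult.commute mult.left_commute)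
  also have "\<dots> = (\<Sum>a\<in>I. \<Sum>c\<in>I. R' a c * S a a' * N c b')"
    using comm b' by (simp add: sum_distrib_left mult.commute mult.left_commute)
  also have "\<dots> = (\<Sum>c\<in>I. (\<Sum>a\<in>I. R' a c * S a a') * N c b')"
    by (subst sum.swap) (simp add: sum_distrib_right)
  also have "\<dots> = N a' b'"
    using assms(1) a' by (simp add: left_inv idmat_commute[of _ a'] sum_idmat_left)
  finally show "(\<Sum>a\<in>I. \<Sum>b\<in>J. S a a' * R b b' * N a b) = N a' b'" .
next
  fix a b' assume fixed: "\<forall>a'\<in>I. \<forall>b'\<in>J. (\<Sum>a\<in>I. \<Sum>b\<in>J. S a a' * R b b' * N a b) = N a' b'"
    and a: "a \<in> I" and b': "b' \<in> J"
  have "(\<Sum>c\<in>I. R' a c * N c b') = (\<Sum>c\<in>I. R' a c * (\<Sum>a''\<in>I. \<Sum>b\<in>J. S a'' c * R b b' * N a'' b))"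
    using fixed b' by (intro sum.cong refl) (simp only:)
  also have "\<dots> = (\<Sum>c\<in>I. \<Sum>a''\<in>I. S a'' c * R' a c * (\<Sum>b\<in>J. N a'' b * R b b'))"
    by (simp add: sum_distrib_left mult.commute mult.left_commute)
  also have "\<dots> = (\<Sum>a''\<in>I. (\<Sum>c\<in>I. S a'' c * R' a c) * (\<Sum>b\<in>J. N a'' b * R b b'))"
    by (subst sum.swap) (simp add: sum_distrib_right)
  also have "\<dots> = (\<Sum>b\<in>J. N a b * R b b')"
    using assms(1) a by (simp add: right_inv idmat_commute[of _ a] sum_idmat_left)
  finally show "(\<Sum>b\<in>J. N a b * R b b') = (\<Sum>c\<in>I. R' a c * N c b')" by simp
qed

abbreviation calR_minus_id :: "nat \<Rightarrow> (nat list \<Rightarrow> nat list \<Rightarrow> 'k::field)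
    \<Rightarrow> (nat list \<Rightarrow> nat list \<Rightarrow> 'k) \<Rightarrow> ((nat \<times> nat) list \<Rightarrow> (nat \<times> nat) list \<Rightarrow> 'k)" where
  "calR_minus_id d' R' R \<equiv> (\<lambda>u w. calR d' R' R u w - idmat u w)"

lemma transpose_act_calR:
  assumes "a' \<in> words {..<d'} 2" "b' \<in> words {..<d} 2"
  shows "transpose_act {..<d'} {..<d} 2 (calR_minus_id d' R' R) N a' b'
       = (\<Sum>a\<in>words {..<d'} 2. \<Sum>b\<in>words {..<d} 2.
            minv {..<d'} 2 (\<lambda>a b. R' b a) a a' * R b b' * N a b) - N a' b'"
proof -
  let ?W = "words ({..<d'} \<times> {..<d}) 2"
  have z: "zip a' b' \<in> ?W" and l: "length a' = length b'"
    using assms by (simp_all add: zip_in_words words_length)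
  have "transpose_act {..<d'} {..<d} 2 (calR_minus_id d' R' R) N a' b'
      = (\<Sum>P\<in>?W. calR d' R' R P (zip a' b') * N (map fst P) (map snd P))
        - (\<Sum>P\<in>?W. N (map fst P) (map snd P) * idmat P (zip a' b'))"
    unfolding transpose_act_def by (simp add: algebra_simps sum_subtractf)
  also have "\<dots> = (\<Sum>P\<in>?W. calR d' R' R P (zip a' b') * N (map fst P) (map snd P)) - N a' b'"
    using z l by (simp add: finite_words sum_idmat_right)
  also have "\<dots> = (\<Sum>a\<in>words {..<d'} 2. \<Sum>b\<in>words {..<d} 2.
            minv {..<d'} 2 (\<lambda>a b. R' b a) a a' * R b b' * N a b) - N a' b'"
    unfolding sum_words_zip using l
    by (intro arg_cong2[where f = minus] sum.cong refl) (simp_all add: calR_def words_def)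
  finally show ?thesis .
qed

lemma intertwines_iff_calR_fixed:
  assumes "q \<noteq> 0" "hecke_symmetry d' q R'"
  shows "intertwines {..<d'} {..<d} R' R N \<longleftrightarrow>
    (\<forall>P\<in>words (Walph d' d) 2.
       transpose_act {..<d'} {..<d} 2 (calR_minus_id d' R' R) N (map fst P) (map snd P) = 0)"
proof -
  let ?S = "minv {..<d'} 2 (\<lambda>a b. R' b a)"
  have "intertwines {..<d'} {..<d} R' R N \<longleftrightarrow> (\<forall>a'\<in>words {..<d'} 2. \<forall>b'\<in>words {..<d} 2.
      (\<Sum>a\<in>words {..<d'} 2. \<Sum>b\<in>words {..<d} 2. ?S a a' * R b b' * N a b) = N a' b')"
    unfolding intertwines_def
    by (rule commute_iff_conjugation_fixed[OF finite_words minv_transpose_hecke[OF assms]]) simp_all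
  also have "\<dots> \<longleftrightarrow> (\<forall>a'\<in>words {..<d'} 2. \<forall>b'\<in>words {..<d} 2.
      transpose_act {..<d'} {..<d} 2 (calR_minus_id d' R' R) N a' b' = 0)"
    by (simp add: transpose_act_calR)
  finally show ?thesis
    unfolding Walph_def ball_words_prod[where f = "\<lambda>a' b'.
      transpose_act {..<d'} {..<d} 2 (calR_minus_id d' R' R) N a' b' = 0"] .
qed

section \<open>The annihilator of the ideal\<close>

definition ideal_gens :: "'x set \<Rightarrow> nat \<Rightarrow> ('x list \<Rightarrow> 'k) set \<Rightarrow> ('x list \<Rightarrow> 'k::field) set" where
  "ideal_gens X n S = {tmul (i + 2) (tmul i x s) y | i x s y.
      i + 2 \<le> n \<and> x \<in> tens X i \<and> s \<in> S \<and> y \<in> tens X (n - 2 - i)}"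

lemma ideal_deg_eq_lspan: "ideal_deg X n S = lspan (ideal_gens X n S)"
  by (simp add: ideal_deg_def ideal_gens_def)

lemma ideal_gens_in_tens:
  assumes "S \<subseteq> tens X 2" "g \<in> ideal_gens X n S"
  shows "g \<in> tens X n"
proof -
  obtain i x s y where g: "g = tmul (i + 2) (tmul i x s) y" and "i + 2 \<le> n"
    and "x \<in> tens X i" "s \<in> S" "y \<in> tens X (n - 2 - i)"
    using assms(2) unfolding ideal_gens_def by blast
  then have "g \<in> tens X (i + 2 + (n - 2 - i))"
    using assms(1) by (blast intro: tmul_in_tens)
  moreover have "i + 2 + (n - 2 - i) = n"
    using \<open>i + 2 \<le> n\<close> by simp
  ultimately show ?thesis
    by (simp only:)
qed

lemma A_rels_in_tens: "A_rels d' d R' R \<subseteq> tens (Walph d' d) 2"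
  by (auto simp: A_rels_def tens_def mapply_def)

lemma pairing_tmul_slices:
  "pairing A B (i + 2 + k) (tmul (i + 2) (tmul i y s) z) M
     = (\<Sum>U1\<in>words (A \<times> B) i. \<Sum>U3\<in>words (A \<times> B) k.
          y U1 * z U3 * pairing A B 2 s (slice M U1 U3))"
proof -
  have "pairing A B (i + 2 + k) (tmul (i + 2) (tmul i y s) z) M
      = (\<Sum>U1\<in>words (A \<times> B) i. \<Sum>P\<in>words (A \<times> B) 2. \<Sum>U3\<in>words (A \<times> B) k.
           y U1 * z U3 * (s P * slice M U1 U3 (map fst P) (map snd P)))"
    unfolding pairing_def sum_words_split3
    by (intro sum.cong refl) (simp add: tmul_def slice_def words_length)
  also have "\<dots> = (\<Sum>U1\<in>words (A \<times> B) i. \<Sum>U3\<in>words (A \<times> B) k.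
          y U1 * z U3 * pairing A B 2 s (slice M U1 U3))"
    unfolding pairing_def by (subst sum.swap) (simp add: sum_distrib_left)
  finally show ?thesis .
qed

lemma pairing_relation_generator:
  "pairing {..<d'} {..<d} (i + 2 + k)
       (tmul (i + 2) (tmul i y (mapply (Walph d' d) 2 (calR_minus_id d' R' R) t)) z) M
     = (\<Sum>U1\<in>words (Walph d' d) i. \<Sum>U3\<in>words (Walph d' d) k. y U1 * z U3 *
          pairing {..<d'} {..<d} 2 t
            (transpose_act {..<d'} {..<d} 2 (calR_minus_id d' R' R) (slice M U1 U3)))"
  unfolding pairing_tmul_slices Walph_def by (simp add: pairing_mapply)

lemma HomH_annihilates_ideal_gens:
  assumes "q \<noteq> 0" "hecke_symmetry d' q R'"
    and M: "M \<in> HomH d d' R R' n" and g: "g \<in> ideal_gens (Walph d' d) n (A_rels d' d R' R)"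
  shows "pairing {..<d'} {..<d} n g M = 0"
proof -
  obtain i y t z where "i + 2 \<le> n"
    and g: "g = tmul (i + 2) (tmul i y (mapply (Walph d' d) 2 (calR_minus_id d' R' R) t)) z"
    using g unfolding ideal_gens_def A_rels_def by blast
  define k where "k = n - 2 - i"
  have n: "n = i + 2 + k"
    using \<open>i + 2 \<le> n\<close> by (simp add: k_def)
  have "pairing {..<d'} {..<d} 2 t
      (transpose_act {..<d'} {..<d} 2 (calR_minus_id d' R' R) (slice M U1 U3)) = 0"
    if "U1 \<in> words (Walph d' d) i" "U3 \<in> words (Walph d' d) k" for U1 U3
  proof (rule pairing_eq_0)
    have "intertwines {..<d'} {..<d} R' R (slice M U1 U3)"
      using M that n unfolding HomH_iff_slices Walph_def by blast
    then show "\<And>P. P \<in> words ({..<d'} \<times> {..<d}) 2 \<Longrightarrow>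
        transpose_act {..<d'} {..<d} 2 (calR_minus_id d' R' R) (slice M U1 U3)
          (map fst P) (map snd P) = 0"
      unfolding intertwines_iff_calR_fixed[OF assms(1,2)] Walph_def by blast
  qed
  then show ?thesis
    unfolding g n pairing_relation_generator by simp
qed

lemma HomH_if_annihilates_ideal_gens:
  assumes "q \<noteq> 0" "hecke_symmetry d' q R'"
    and supp: "\<forall>u w. u \<notin> words {..<d'} n \<or> w \<notin> words {..<d} n \<longrightarrow> M u w = 0"
    and ann: "\<forall>g\<in>ideal_gens (Walph d' d) n (A_rels d' d R' R). pairing {..<d'} {..<d} n g M = 0"
  shows "M \<in> HomH d d' R R' n"
  unfolding HomH_iff_slices
proof (intro conjI allI impI ballI)
  fix i k U1 U3 assume n: "i + 2 + k = n"
    and U1: "U1 \<in> words ({..<d'} \<times> {..<d}) i" and U3: "U3 \<in> words ({..<d'} \<times> {..<d}) k"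
  show "intertwines {..<d'} {..<d} R' R (slice M U1 U3)"
    unfolding intertwines_iff_calR_fixed[OF assms(1,2)]
  proof
    fix P assume P: "P \<in> words (Walph d' d) 2"
    let ?rel = "mapply (Walph d' d) 2 (calR_minus_id d' R' R) (idmat P)"
    let ?g = "tmul (i + 2) (tmul i (idmat U1) ?rel) (idmat U3)"
    have "?g \<in> ideal_gens (Walph d' d) n (A_rels d' d R' R)"
      unfolding ideal_gens_def A_rels_def
      using n U1 U3 P by (fastforce simp: Walph_def intro: idmat_in_tens)
    then have "0 = pairing {..<d'} {..<d} (i + 2 + k) ?g M"
      using ann n by simp
    also have "\<dots> = transpose_act {..<d'} {..<d} 2 (calR_minus_id d' R' R)
        (slice M U1 U3) (map fst P) (map snd P)"
      using U1 U3 P unfolding pairing_relation_generator unfolding Walph_def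
      by (simp add: finite_words pairing_idmat mult.assoc sum_distrib_left[symmetric] sum_idmat_left)
    finally show "transpose_act {..<d'} {..<d} 2 (calR_minus_id d' R' R)
        (slice M U1 U3) (map fst P) (map snd P) = 0" by simp
  qed
qed (use supp in blast)

section \<open>Linear functionals\<close>

lemma vector_space_mult: "vector_space ((*) :: 'k::field \<Rightarrow> 'k \<Rightarrow> 'k)"
  by unfold_locales (auto simp: algebra_simps)

context vector_space
begin

lemma exists_linear_functional_separating:
  assumes "x \<notin> span S"
  shows "\<exists>g. Vector_Spaces.linear scale ((*) :: 'a \<Rightarrow> 'a \<Rightarrow> 'a) g \<and> (\<forall>v\<in>S. g v = 0) \<and> g x = 1"
proof -
  interpret pair: vector_space_pair scale "(*) :: 'a \<Rightarrow> 'a \<Rightarrow> 'a"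
    unfolding vector_space_pair_def using vector_space_axioms vector_space_mult by blast
  obtain B where B: "B \<subseteq> span S" "independent B" "span S \<subseteq> span B"
    using maximal_independent_subset[of "span S"] by blast
  have "x \<notin> span B"
    using assms B(1) span_minimal[OF _ subspace_span] by blast
  then have ind: "independent (insert x B)" and "x \<notin> B"
    using independent_insertI[OF _ B(2)] span_base by blast+
  obtain g where g: "Vector_Spaces.linear scale (*) g" "\<forall>v\<in>insert x B. g v = (if v = x then 1 else 0)"
    using pair.linear_independent_extend[OF ind, of "\<lambda>v. if v = x then 1 else 0"] by blast
  interpret g: linear scale "(*) :: 'a \<Rightarrow> 'a \<Rightarrow> 'a" g by (rule g(1))
  have "g v = 0" if "v \<in> span B" for v
    using that by (rule g.eq_0_on_span[rotated]) (use g(2) \<open>x \<notin> B\<close> in auto)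
  then have "\<forall>v\<in>S. g v = 0"
    using B(3) span_base by blast
  moreover have "g x = 1"
    using g(2) by simp
  ultimately show ?thesis
    using g(1) by blast
qed

lemma exists_linear_functional_extension:
  assumes H: "subspace H"
    and add: "\<And>M N. M \<in> H \<Longrightarrow> N \<in> H \<Longrightarrow> f (M + N) = f M + f N"
    and scale: "\<And>M c. M \<in> H \<Longrightarrow> f (scale c M) = c * f M"
  shows "\<exists>F. Vector_Spaces.linear scale ((*) :: 'a \<Rightarrow> 'a \<Rightarrow> 'a) F \<and> (\<forall>M\<in>H. F M = f M)"
proof -
  interpret pair: vector_space_pair scale "(*) :: 'a \<Rightarrow> 'a \<Rightarrow> 'a"
    unfolding vector_space_pair_def using vector_space_axioms vector_space_mult by blast
  obtain B where B: "B \<subseteq> H" "independent B" "H \<subseteq> span B"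
    using maximal_independent_subset[of H] by blast
  obtain F where F: "Vector_Spaces.linear scale (*) F" "\<forall>v\<in>B. F v = f v"
    using pair.linear_independent_extend[OF B(2)] by blast
  interpret F: linear scale "(*) :: 'a \<Rightarrow> 'a \<Rightarrow> 'a" F by (rule F(1))
  have "subspace {v \<in> H. F v = f v}"
    unfolding subspace_def using H add scale scale[of 0 0]
    by (auto simp: F.add F.scale subspace_0 subspace_add subspace_scale)
  then have "span B \<subseteq> {v \<in> H. F v = f v}"
    using B(1) F(2) by (intro span_minimal) auto
  then show ?thesis
    using B(3) F(1) by blast
qed

end

definition fun_scale :: "'k::field \<Rightarrow> ('a \<Rightarrow> 'k) \<Rightarrow> ('a \<Rightarrow> 'k)" where
  "fun_scale c f = (\<lambda>x. c * f x)"

definition mat_scale :: "'k::field \<Rightarrow> ('a \<Rightarrow> 'b \<Rightarrow> 'k) \<Rightarrow> ('a \<Rightarrow> 'b \<Rightarrow> 'k)" where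
  "mat_scale c M = (\<lambda>u w. c * M u w)"

lemma module_fun_scale: "module (fun_scale :: 'k::field \<Rightarrow> ('a \<Rightarrow> 'k) \<Rightarrow> _)"
  by unfold_locales (auto simp: fun_scale_def fun_eq_iff algebra_simps)

lemma module_mat_scale: "module (mat_scale :: 'k::field \<Rightarrow> ('a \<Rightarrow> 'b \<Rightarrow> 'k) \<Rightarrow> _)"
  by unfold_locales (auto simp: mat_scale_def fun_eq_iff algebra_simps)

lemma sum_fun_apply: "(sum f A) x = (\<Sum>a\<in>A. f a x)"
  by (induct A rule: infinite_finite_induct) auto

lemma span_fun_scale:
  fixes S :: "('a \<Rightarrow> 'k::field) set"
  shows "module.span fun_scale S = lspan S"
proof -
  have "(\<Sum>a\<in>F. fun_scale (c a) a) = (\<lambda>w. \<Sum>f\<in>F. c f * f w)"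
    for F :: "('a \<Rightarrow> 'k) set" and c
    by (simp add: fun_eq_iff sum_fun_apply fun_scale_def)
  then show ?thesis
    unfolding module.span_explicit[OF module_fun_scale] lspan_def by auto
qed

lemma HomH_subspace: "module.subspace mat_scale (HomH d d' R R' n)"
  unfolding module.subspace_def[OF module_mat_scale]
proof (intro conjI ballI allI)
  show "0 \<in> HomH d d' R R' n"
    unfolding HomH_def by simp
next
  fix M N assume "M \<in> HomH d d' R R' n" "N \<in> HomH d d' R R' n"
  then show "M + N \<in> HomH d d' R R' n"
    unfolding HomH_def by (simp add: distrib_right distrib_left sum.distrib)
next
  fix c M assume "M \<in> HomH d d' R R' n"
  then show "mat_scale c M \<in> HomH d d' R R' n"
    unfolding HomH_def mat_scale_def
    by (simp add: mult.assoc mult.left_commute sum_distrib_left[symmetric])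
qed

lemma linear_functional_eq_pairing:
  fixes g :: "(('a \<times> 'b) list \<Rightarrow> 'k::field) \<Rightarrow> 'k"
  assumes "finite A" "finite B" "Vector_Spaces.linear fun_scale (*) g" "y \<in> tens (A \<times> B) n"
  shows "pairing A B n y (\<lambda>u w. if u \<in> words A n \<and> w \<in> words B n then g (idmat (zip u w)) else 0) = g y"
proof -
  interpret g: linear fun_scale "(*) :: 'k \<Rightarrow> 'k \<Rightarrow> 'k" g by fact
  let ?W = "words (A \<times> B) n"
  have fin: "finite ?W"
    using assms(1,2) by (simp add: finite_words)
  have y: "y = (\<Sum>U\<in>?W. fun_scale (y U) (idmat U))"
  proof
    fix V
    show "y V = (\<Sum>U\<in>?W. fun_scale (y U) (idmat U)) V"
    proof (cases "V \<in> ?W")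
      case True
      then show ?thesis
        using fin by (simp add: sum_fun_apply fun_scale_def sum_idmat_right)
    next
      case False
      then show ?thesis
        using assms(4) by (auto simp: sum_fun_apply fun_scale_def tens_def idmat_def intro!: sum.neutral)
    qed
  qed
  have "g y = (\<Sum>U\<in>?W. y U * g (idmat U))"
    by (subst y) (simp add: g.sum g.scale)
  also have "\<dots> = pairing A B n y
      (\<lambda>u w. if u \<in> words A n \<and> w \<in> words B n then g (idmat (zip u w)) else 0)"
    unfolding pairing_def
    by (intro sum.cong refl) (simp add: zip_map_fst_snd map_fst_in_words[of _ A B] map_snd_in_words[of _ A B])
  finally show ?thesis ..
qed

lemma linear_functional_on_matrices_eq_pairing:
  fixes F :: "('a list \<Rightarrow> 'b list \<Rightarrow> 'k::field) \<Rightarrow> 'k"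
  assumes "finite A" "finite B" "Vector_Spaces.linear mat_scale (*) F"
  shows "\<exists>x\<in>tens (A \<times> B) n. \<forall>M. (\<forall>u w. u \<notin> words A n \<or> w \<notin> words B n \<longrightarrow> M u w = 0)
           \<longrightarrow> pairing A B n x M = F M"
proof
  interpret F: linear mat_scale "(*) :: 'k \<Rightarrow> 'k \<Rightarrow> 'k" F by fact
  let ?W = "words (A \<times> B) n"
  define E where "E U = (\<lambda>u w. idmat (map fst U) u * idmat (map snd U) w :: 'k)" for U :: "('a \<times> 'b) list"
  define x where "x U = (if U \<in> ?W then F (E U) else 0)" for U
  show "x \<in> tens (A \<times> B) n"
    by (simp add: tens_def x_def)
  show "\<forall>M. (\<forall>u w. u \<notin> words A n \<or> w \<notin> words B n \<longrightarrow> M u w = 0) \<longrightarrow> pairing A B n x M = F M"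
  proof safe
    fix M :: "'a list \<Rightarrow> 'b list \<Rightarrow> 'k"
    assume supp: "\<forall>u w. u \<notin> words A n \<or> w \<notin> words B n \<longrightarrow> M u w = 0"
    have M: "M = (\<Sum>U\<in>?W. mat_scale (M (map fst U) (map snd U)) (E U))"
    proof (intro ext)
      fix u w
      have "(\<Sum>U\<in>?W. mat_scale (M (map fst U) (map snd U)) (E U)) u w
          = (\<Sum>a\<in>words A n. \<Sum>b\<in>words B n. M a b * idmat a u * idmat b w)"
        unfolding sum_fun_apply sum_words_zip mat_scale_def E_def
        by (intro sum.cong refl) (simp add: words_def)
      also have "\<dots> = M u w"
      proof (cases "u \<in> words A n \<and> w \<in> words B n")
        case True
        then show ?thesis
          using assms(1,2) by (simp add: finite_words sum_idmat_right sum_distrib_right[symmetric])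
      next
        case False
        then show ?thesis
          using supp by (auto simp: idmat_def intro!: sum.neutral)
      qed
      finally show "M u w = (\<Sum>U\<in>?W. mat_scale (M (map fst U) (map snd U)) (E U)) u w" ..
    qed
    have "pairing A B n x M = (\<Sum>U\<in>?W. M (map fst U) (map snd U) * F (E U))"
      unfolding pairing_def x_def by (simp add: mult.commute)
    also have "\<dots> = F M"
      by (subst (2) M) (simp add: F.sum F.scale)
    finally show "pairing A B n x M = F M" .
  qed
qed

lemma lin_functional_HomH_eq_pairing:
  assumes f: "lin_functional (HomH d d' R R' n) f"
  shows "\<exists>x\<in>tens (Walph d' d) n. \<forall>M\<in>HomH d d' R R' n. pairing {..<d'} {..<d} n x M = f M"
proof -
  let ?H = "HomH d d' R R' n"
  have "f (M + N) = f M + f N" if "M \<in> ?H" "N \<in> ?H" for M N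
  proof -
    have "f (\<lambda>u w. 1 * M u w + 1 * N u w) = 1 * f M + 1 * f N"
      using f that unfolding lin_functional_def by blast
    then show ?thesis
      by (simp add: plus_fun_def)
  qed
  moreover have "f (mat_scale c M) = c * f M" if "M \<in> ?H" for M c
  proof -
    have "f (\<lambda>u w. c * M u w + 0 * M u w) = c * f M + 0 * f M"
      using f that unfolding lin_functional_def by blast
    then show ?thesis
      by (simp add: mat_scale_def)
  qed
  ultimately obtain F where F: "Vector_Spaces.linear mat_scale (*) F" "\<forall>M\<in>?H. F M = f M"
    using vector_space.exists_linear_functional_extension[OF module_mat_scale[unfolded module_iff_vector_space]
        HomH_subspace] by blast
  obtain x where "x \<in> tens (Walph d' d) n" and x: "\<forall>M. (\<forall>u w. u \<notin> words {..<d'} n \<or> w \<notin> words {..<d} n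
      \<longrightarrow> M u w = 0) \<longrightarrow> pairing {..<d'} {..<d} n x M = F M"
    using linear_functional_on_matrices_eq_pairing[OF finite_lessThan finite_lessThan F(1)]
    unfolding Walph_def by blast
  moreover have "pairing {..<d'} {..<d} n x M = f M" if "M \<in> ?H" for M
  proof -
    have "\<forall>u w. u \<notin> words {..<d'} n \<or> w \<notin> words {..<d} n \<longrightarrow> M u w = 0"
      using that unfolding HomH_def by blast
    then show ?thesis
      using x F(2) that by simp
  qed
  ultimately show ?thesis
    by blast
qed

lemma annihilator_HomH_eq_A_ideal:
  assumes "q \<noteq> 0" "hecke_symmetry d' q R'" and x: "x \<in> tens (Walph d' d) n"
  shows "(\<forall>M\<in>HomH d d' R R' n. pairing {..<d'} {..<d} n x M = 0) \<longleftrightarrow> x \<in> A_ideal d' d R' R n"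
proof
  let ?G = "ideal_gens (Walph d' d) n (A_rels d' d R' R)"
  assume ann: "\<forall>M\<in>HomH d d' R R' n. pairing {..<d'} {..<d} n x M = 0"
  show "x \<in> A_ideal d' d R' R n"
  proof (rule ccontr)
    assume "x \<notin> A_ideal d' d R' R n"
    then have "x \<notin> module.span fun_scale ?G"
      by (simp add: A_ideal_def ideal_deg_eq_lspan span_fun_scale)
    then obtain g where g: "Vector_Spaces.linear fun_scale (*) g" "\<forall>v\<in>?G. g v = 0" "g x = 1"
      using vector_space.exists_linear_functional_separating[OF module_fun_scale[unfolded module_iff_vector_space]]
      by blast
    define M where "M = (\<lambda>u w. if u \<in> words {..<d'} n \<and> w \<in> words {..<d} n then g (idmat (zip u w)) else 0)"
    have pairing_M: "pairing {..<d'} {..<d} n y M = g y" if "y \<in> tens (Walph d' d) n" for y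
      using linear_functional_eq_pairing[OF finite_lessThan finite_lessThan g(1)] that
      unfolding M_def Walph_def by blast
    have "M \<in> HomH d d' R R' n"
    proof (rule HomH_if_annihilates_ideal_gens[OF assms(1,2)])
      show "\<forall>u w. u \<notin> words {..<d'} n \<or> w \<notin> words {..<d} n \<longrightarrow> M u w = 0"
        unfolding M_def by auto
      show "\<forall>v\<in>?G. pairing {..<d'} {..<d} n v M = 0"
        using g(2) pairing_M[OF ideal_gens_in_tens[OF A_rels_in_tens]] by simp
    qed
    then show False
      using ann pairing_M[OF x] g(3) by simp
  qed
next
  assume "x \<in> A_ideal d' d R' R n"
  then obtain F c where F: "finite F" "F \<subseteq> ideal_gens (Walph d' d) n (A_rels d' d R' R)"
    and x: "x = (\<lambda>w. \<Sum>f\<in>F. c f * f w)"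
    unfolding A_ideal_def ideal_deg_eq_lspan lspan_def by blast
  show "\<forall>M\<in>HomH d d' R R' n. pairing {..<d'} {..<d} n x M = 0"
    using F HomH_annihilates_ideal_gens[OF assms(1,2)] unfolding x
    by (auto simp: pairing_lin_comb intro!: sum.neutral)
qed

theorem lemma6p3:
  fixes q :: "'k::field" and d d' n :: nat
    and R R' :: "nat list \<Rightarrow> nat list \<Rightarrow> 'k"
  assumes "q \<noteq> 0"
    and "hecke_symmetry d q R"
    and "hecke_symmetry d' q R'"
  shows "\<exists>\<phi> :: ((nat \<times> nat) list \<Rightarrow> 'k) \<Rightarrow> (nat list \<Rightarrow> nat list \<Rightarrow> 'k) \<Rightarrow> 'k.
     (\<forall>x\<in>tens (Walph d' d) n. \<forall>y\<in>tens (Walph d' d) n. \<forall>a b. \<forall>M\<in>HomH d d' R R' n.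
        \<phi> (\<lambda>w. a * x w + b * y w) M = a * \<phi> x M + b * \<phi> y M) \<and>
     (\<forall>x\<in>tens (Walph d' d) n. lin_functional (HomH d d' R R' n) (\<phi> x)) \<and>
     (\<forall>f. lin_functional (HomH d d' R R' n) f \<longrightarrow>
        (\<exists>x\<in>tens (Walph d' d) n. \<forall>M\<in>HomH d d' R R' n. \<phi> x M = f M)) \<and>
     (\<forall>x\<in>tens (Walph d' d) n.
        (\<forall>M\<in>HomH d d' R R' n. \<phi> x M = 0) \<longleftrightarrow> x \<in> A_ideal d' d R' R n)"
proof -
  let ?\<phi> = "pairing {..<d'} {..<d} n"
  have "?\<phi> (\<lambda>w. a * x w + b * y w) M = a * ?\<phi> x M + b * ?\<phi> y M" for x y a b M
    by (rule pairing_linear_left)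
  moreover have "lin_functional (HomH d d' R R' n) (?\<phi> x)" for x
    unfolding lin_functional_def by (simp add: pairing_linear_right)
  ultimately show ?thesis
    using lin_functional_HomH_eq_pairing[of d d' R R' n] annihilator_HomH_eq_A_ideal[OF assms(1,3), of _ d n R]
    by (intro exI[of _ ?\<phi>]) blast
qed

end
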